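(* Let $(M,J,g)$ be an almost Hermitian manifold with canonical (almost Chern) connection $\nabla$, let $p\in M$, and let $\{e_i\}$ be a local $(1,0)$-frame that is pseudo holomorphic at $p$ (each $e_i$ is pseudo holomorphic at $p$). Then: (a) $\Gamma^{\ell}_{\bar j k}(p)=0$; (b) $\Gamma^{\bar\ell}_{j\bar k}(p)=0$; (c) $[e_j,\bar e_k](p)=0$; (d) $\Gamma^k_{ij}(p)=e_i[g_{j\bar\ell}](p)\,g^{k\bar\ell}(p)$; (e) $\Gamma^{\bar k}_{\bar i\bar j}(p)=\bar e_i[g_{\ell\bar j}](p)\,g^{\ell\bar k}(p)$; (f) if $\{e_i\}$ is quasi holomorphic at $p$, then $(\nabla_{e_i}\nabla_{\bar e_j}e_k)(p)=0$; (g) if $\{e_i\}$ is quasi holomorphic at $p$, then $R_{i\bar jk\bar\ell}(p)=-\bar e_j[e_i[g_{k\bar\ell}]](p)+g^{a\bar b}e_i[g_{k\bar b}]\,\bar e_j[g_{a\bar\ell}](p)$; (h) if $\{e_i\}$ is normal quasi holomorphic at $p$, then $R_{i\bar jk\bar\ell}(p)=-\bar e_j[e_i[g_{k\bar\ell}]](p)$.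
   Context: An almost Hermitian manifold $(M,J,g)$: $J^2=-\mathrm{Id}$ on $TM$, $g(J\cdot,J\cdot)=g$. The canonical (almost Chern) connection is the unique connection $\nabla$ with $\nabla g=0$, $\nabla J=0$, and torsion with vanishing $(1,1)$-component; $g$ and $\nabla$ are extended complex-(bi)linearly to $T^{\mathbb C}M=T^{1,0}M\oplus T^{0,1}M$. For a $(1,0)$-frame $\{e_i\}$ with dual coframe $\{\theta^i\}$, Christoffel symbols are defined by $\nabla_{e_A}e_B=\Gamma^C_{AB}e_C$ where indices range over both $e_i$ and $\bar e_i$ (e.g. $\Gamma^\ell_{\bar jk}=\theta^\ell(\nabla_{\bar e_j}e_k)$, and $\Gamma^{\bar\ell}_{j\bar k}$ is the $\bar e_\ell$-coefficient of $\nabla_{e_j}\bar e_k$). Set $g_{k\bar\ell}=g(e_k,\bar e_\ell)$ and let $g^{k\bar\ell}$ be the inverse matrix, $g^{k\bar\ell}g_{m\bar\ell}=\delta^k_m$; repeated indices are summed. Curvature: $R_{i\bar jk\bar\ell}=g(\nabla_{e_i}\nabla_{\bar e_j}e_k-\nabla_{\bar e_j}\nabla_{e_i}e_k-\nabla_{[e_i,\bar e_j]}e_k,\bar e_\ell)$. For a complex vector field $V$, $V^{1,0}$ is its $T^{1,0}M$-component. A $(1,0)$-vector field $W$ is pseudo holomorphic at $p$ if $[\bar X,W]^{1,0}(p)=0$ for every $(1,0)$-vector field $X$; it is quasi holomorphic at $p$ if it is pseudo holomorphic at $p$ and $[X,[\bar Y,W]]^{1,0}(p)=0$ for all $(1,0)$-vector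 fields $X,Y$ that are pseudo holomorphic at $p$; it is normal pseudo (resp. quasi) holomorphic at $p$ if in addition $(\nabla W)(p)=0$. A frame has one of these properties if each of its members does. *)

theory Defs
  imports "HOL-Analysis.Analysis"
begin

text \<open>Local model: the almost Hermitian manifold is represented by an open coordinate
 domain U in R^m (m = 2n).  Real tangent vectors are real^'m, complexified tangent
 vectors are complex^'m.\<close>

fun ah_Ck :: "nat \<Rightarrow> (real^'m) set \<Rightarrow> (real^'m \<Rightarrow> complex) \<Rightarrow> bool" where
  "ah_Ck 0 U f = continuous_on U f"
| "ah_Ck (Suc k) U f =
     ((\<forall>x\<in>U. f differentiable (at x)) \<and>
      (\<forall>a. ah_Ck k U (\<lambda>x. frechet_derivative f (at x) (axis a 1))))"

definition ah_smooth :: "(real^'m) set \<Rightarrow> (real^'m \<Rightarrow> complex) \<Rightarrow> bool" where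
  "ah_smooth U f \<longleftrightarrow> (\<forall>k. ah_Ck k U f)"

definition ah_field :: "(real^'m) set \<Rightarrow> (real^'m \<Rightarrow> complex^'m) \<Rightarrow> bool" where
  "ah_field U Y \<longleftrightarrow> (\<forall>c. ah_smooth U (\<lambda>x. Y x $ c))"

definition ah_dirc :: "complex^'m \<Rightarrow> (real^'m \<Rightarrow> complex) \<Rightarrow> real^'m \<Rightarrow> complex" where
  "ah_dirc v f x = (\<Sum>a\<in>UNIV. v $ a * frechet_derivative f (at x) (axis a 1))"

definition ah_dirv :: "complex^'m \<Rightarrow> (real^'m \<Rightarrow> complex^'m) \<Rightarrow> real^'m \<Rightarrow> complex^'m" where
  "ah_dirv v Y x = (\<chi> c. ah_dirc v (\<lambda>y. Y y $ c) x)"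

definition ah_vf :: "(real^'m \<Rightarrow> complex^'m) \<Rightarrow> (real^'m \<Rightarrow> complex) \<Rightarrow> real^'m \<Rightarrow> complex" where
  "ah_vf X f x = ah_dirc (X x) f x"

definition ah_lie :: "(real^'m \<Rightarrow> complex^'m) \<Rightarrow> (real^'m \<Rightarrow> complex^'m) \<Rightarrow> real^'m \<Rightarrow> complex^'m" where
  "ah_lie X Y x = ah_dirv (X x) Y x - ah_dirv (Y x) X x"

definition vcnj :: "complex^'m \<Rightarrow> complex^'m" where
  "vcnj v = (\<chi> c. cnj (v $ c))"

definition fcnj :: "(real^'m \<Rightarrow> complex^'m) \<Rightarrow> real^'m \<Rightarrow> complex^'m" where
  "fcnj X = (\<lambda>x. vcnj (X x))"

text \<open>Complex-linear extension of J and complex-bilinear extension of g.\<close>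
definition Jc :: "(real^'m \<Rightarrow> real^'m^'m) \<Rightarrow> real^'m \<Rightarrow> complex^'m \<Rightarrow> complex^'m" where
  "Jc J x v = (\<chi> c. \<Sum>b\<in>UNIV. complex_of_real (J x $ c $ b) * v $ b)"

definition gc :: "(real^'m \<Rightarrow> real^'m^'m) \<Rightarrow> real^'m \<Rightarrow> complex^'m \<Rightarrow> complex^'m \<Rightarrow> complex" where
  "gc g x v w = (\<Sum>a\<in>UNIV. \<Sum>b\<in>UNIV. v $ a * complex_of_real (g x $ a $ b) * w $ b)"

definition almost_hermitian ::
  "(real^'m) set \<Rightarrow> (real^'m \<Rightarrow> real^'m^'m) \<Rightarrow> (real^'m \<Rightarrow> real^'m^'m) \<Rightarrow> bool" where
  "almost_hermitian U J g \<longleftrightarrow>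
     open U \<and>
     (\<forall>a b. ah_smooth U (\<lambda>x. complex_of_real (J x $ a $ b))) \<and>
     (\<forall>a b. ah_smooth U (\<lambda>x. complex_of_real (g x $ a $ b))) \<and>
     (\<forall>x\<in>U. J x ** J x = - mat 1) \<and>
     (\<forall>x\<in>U. transpose (g x) = g x) \<and>
     (\<forall>x\<in>U. \<forall>v. v \<noteq> 0 \<longrightarrow> v \<bullet> (g x *v v) > 0) \<and>
     (\<forall>x\<in>U. \<forall>v w. (J x *v v) \<bullet> (g x *v (J x *v w)) = v \<bullet> (g x *v w))"

definition proj10 :: "(real^'m \<Rightarrow> real^'m^'m) \<Rightarrow> real^'m \<Rightarrow> complex^'m \<Rightarrow> complex^'m" where
  "proj10 J x v = (1/2 :: complex) *s (v - \<i> *s Jc J x v)"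

definition field10 :: "(real^'m) set \<Rightarrow> (real^'m \<Rightarrow> real^'m^'m) \<Rightarrow> (real^'m \<Rightarrow> complex^'m) \<Rightarrow> bool" where
  "field10 U J X \<longleftrightarrow> ah_field U X \<and> (\<forall>x\<in>U. Jc J x (X x) = \<i> *s X x)"

text \<open>A connection on U given by its real coordinate Christoffel symbols
  Gam x a b c (nabla_{d_a} d_b = sum_c Gam x a b c d_c), extended complex-linearly.\<close>
definition nablav :: "(real^'m \<Rightarrow> 'm \<Rightarrow> 'm \<Rightarrow> 'm \<Rightarrow> real) \<Rightarrow> real^'m \<Rightarrow> complex^'m
     \<Rightarrow> (real^'m \<Rightarrow> complex^'m) \<Rightarrow> complex^'m" where
  "nablav Gam x v Y = ah_dirv v Y x +
     (\<chi> c. \<Sum>a\<in>UNIV. \<Sum>b\<in>UNIV. v $ a * Y x $ b * complex_of_real (Gam x a b c))"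

definition nabla :: "(real^'m \<Rightarrow> 'm \<Rightarrow> 'm \<Rightarrow> 'm \<Rightarrow> real) \<Rightarrow> (real^'m \<Rightarrow> complex^'m)
     \<Rightarrow> (real^'m \<Rightarrow> complex^'m) \<Rightarrow> real^'m \<Rightarrow> complex^'m" where
  "nabla Gam X Y x = nablav Gam x (X x) Y"

definition torsion :: "(real^'m \<Rightarrow> 'm \<Rightarrow> 'm \<Rightarrow> 'm \<Rightarrow> real) \<Rightarrow> (real^'m \<Rightarrow> complex^'m)
     \<Rightarrow> (real^'m \<Rightarrow> complex^'m) \<Rightarrow> real^'m \<Rightarrow> complex^'m" where
  "torsion Gam X Y x = nabla Gam X Y x - nabla Gam Y X x - ah_lie X Y x"

text \<open>The canonical (almost Chern) connection: nabla g = 0, nabla J = 0 and the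
  (1,1)-component of the torsion vanishes, i.e. T(X, Ybar) = 0 for (1,0)-fields X, Y.\<close>
definition canonical_connection ::
  "(real^'m) set \<Rightarrow> (real^'m \<Rightarrow> real^'m^'m) \<Rightarrow> (real^'m \<Rightarrow> real^'m^'m)
     \<Rightarrow> (real^'m \<Rightarrow> 'm \<Rightarrow> 'm \<Rightarrow> 'm \<Rightarrow> real) \<Rightarrow> bool" where
  "canonical_connection U J g Gam \<longleftrightarrow>
     (\<forall>a b c. ah_smooth U (\<lambda>x. complex_of_real (Gam x a b c))) \<and>
     (\<forall>Y Z. ah_field U Y \<longrightarrow> ah_field U Z \<longrightarrow> (\<forall>x\<in>U. \<forall>v.
        ah_dirc v (\<lambda>y. gc g y (Y y) (Z y)) x =
        gc g x (nablav Gam x v Y) (Z x) + gc g x (Y x) (nablav Gam x v Z))) \<and>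
     (\<forall>Y. ah_field U Y \<longrightarrow> (\<forall>x\<in>U. \<forall>v.
        nablav Gam x v (\<lambda>y. Jc J y (Y y)) = Jc J x (nablav Gam x v Y))) \<and>
     (\<forall>X Y. field10 U J X \<longrightarrow> field10 U J Y \<longrightarrow>
        (\<forall>x\<in>U. torsion Gam X (fcnj Y) x = 0))"

text \<open>A local (1,0)-frame on U: n = CARD('n) smooth (1,0)-fields, C-linearly
  independent at every point (hence a basis of T^{1,0} when CARD('m) = 2 n).\<close>
definition frame10 :: "(real^'m) set \<Rightarrow> (real^'m \<Rightarrow> real^'m^'m)
     \<Rightarrow> ('n \<Rightarrow> real^'m \<Rightarrow> complex^'m) \<Rightarrow> bool" where
  "frame10 U J e \<longleftrightarrow> (\<forall>i. field10 U J (e i)) \<and>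
     (\<forall>x\<in>U. \<forall>c::'n \<Rightarrow> complex. (\<Sum>i\<in>UNIV. c i *s e i x) = 0 \<longrightarrow> (\<forall>i. c i = 0))"

text \<open>Combined frame {e_i, ebar_i}: Inl i stands for e_i, Inr i for ebar_i.\<close>
definition frameE :: "('n \<Rightarrow> real^'m \<Rightarrow> complex^'m) \<Rightarrow> 'n + 'n \<Rightarrow> real^'m \<Rightarrow> complex^'m" where
  "frameE e A = (case A of Inl i \<Rightarrow> e i | Inr i \<Rightarrow> fcnj (e i))"

text \<open>Christoffel symbols: nabla_{E_A} E_B = Gamma^C_{AB} E_C.\<close>
definition chr :: "(real^'m \<Rightarrow> 'm \<Rightarrow> 'm \<Rightarrow> 'm \<Rightarrow> real) \<Rightarrow> ('n \<Rightarrow> real^'m \<Rightarrow> complex^'m)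
     \<Rightarrow> 'n + 'n \<Rightarrow> 'n + 'n \<Rightarrow> 'n + 'n \<Rightarrow> real^'m \<Rightarrow> complex" where
  "chr Gam e A B C x =
     (THE c :: 'n + 'n \<Rightarrow> complex.
        nabla Gam (frameE e A) (frameE e B) x = (\<Sum>D\<in>UNIV. c D *s frameE e D x)) C"

definition gfr :: "(real^'m \<Rightarrow> real^'m^'m) \<Rightarrow> ('n \<Rightarrow> real^'m \<Rightarrow> complex^'m)
     \<Rightarrow> 'n \<Rightarrow> 'n \<Rightarrow> real^'m \<Rightarrow> complex" where
  "gfr g e k l x = gc g x (e k x) (vcnj (e l x))"

text \<open>Inverse matrix g^{k lbar}: sum_l g^{k lbar} g_{m lbar} = delta^k_m.\<close>
definition ginv :: "(real^'m \<Rightarrow> real^'m^'m) \<Rightarrow> ('n \<Rightarrow> real^'m \<Rightarrow> complex^'m)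
     \<Rightarrow> real^'m \<Rightarrow> 'n \<Rightarrow> 'n \<Rightarrow> complex" where
  "ginv g e x = (THE H :: 'n \<Rightarrow> 'n \<Rightarrow> complex.
     \<forall>k m. (\<Sum>l\<in>UNIV. H k l * gfr g e m l x) = (if k = m then 1 else 0))"

definition curv :: "(real^'m \<Rightarrow> real^'m^'m) \<Rightarrow> (real^'m \<Rightarrow> 'm \<Rightarrow> 'm \<Rightarrow> 'm \<Rightarrow> real)
     \<Rightarrow> ('n \<Rightarrow> real^'m \<Rightarrow> complex^'m) \<Rightarrow> 'n \<Rightarrow> 'n \<Rightarrow> 'n \<Rightarrow> 'n \<Rightarrow> real^'m \<Rightarrow> complex" where
  "curv g Gam e i j k l x =
     gc g x (nabla Gam (e i) (nabla Gam (fcnj (e j)) (e k)) x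
             - nabla Gam (fcnj (e j)) (nabla Gam (e i) (e k)) x
             - nabla Gam (ah_lie (e i) (fcnj (e j))) (e k) x)
          (vcnj (e l x))"

definition pseudo_hol :: "(real^'m) set \<Rightarrow> (real^'m \<Rightarrow> real^'m^'m)
     \<Rightarrow> (real^'m \<Rightarrow> complex^'m) \<Rightarrow> real^'m \<Rightarrow> bool" where
  "pseudo_hol U J W p \<longleftrightarrow> field10 U J W \<and>
     (\<forall>X. field10 U J X \<longrightarrow> proj10 J p (ah_lie (fcnj X) W p) = 0)"

definition quasi_hol :: "(real^'m) set \<Rightarrow> (real^'m \<Rightarrow> real^'m^'m)
     \<Rightarrow> (real^'m \<Rightarrow> complex^'m) \<Rightarrow> real^'m \<Rightarrow> bool" where
  "quasi_hol U J W p \<longleftrightarrow> pseudo_hol U J W p \<and>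
     (\<forall>X Y. field10 U J X \<longrightarrow> field10 U J Y \<longrightarrow> pseudo_hol U J X p \<longrightarrow> pseudo_hol U J Y p \<longrightarrow>
        proj10 J p (ah_lie X (ah_lie (fcnj Y) W) p) = 0)"

definition nabla_vanishes :: "(real^'m \<Rightarrow> 'm \<Rightarrow> 'm \<Rightarrow> 'm \<Rightarrow> real)
     \<Rightarrow> (real^'m \<Rightarrow> complex^'m) \<Rightarrow> real^'m \<Rightarrow> bool" where
  "nabla_vanishes Gam W p \<longleftrightarrow> (\<forall>v. nablav Gam p v W = 0)"

definition normal_quasi_hol :: "(real^'m) set \<Rightarrow> (real^'m \<Rightarrow> real^'m^'m)
     \<Rightarrow> (real^'m \<Rightarrow> 'm \<Rightarrow> 'm \<Rightarrow> 'm \<Rightarrow> real) \<Rightarrow> (real^'m \<Rightarrow> complex^'m) \<Rightarrow> real^'m \<Rightarrow> bool" where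
  "normal_quasi_hol U J Gam W p \<longleftrightarrow> quasi_hol U J W p \<and> nabla_vanishes Gam W p"

end

theory Submission
  imports Defs
begin

(* The key identity is nabla_{Xbar} Y = [Xbar, Y]^{1,0} for (1,0)-fields X, Y: the canonical
   connection preserves types and its (1,1)-torsion vanishes.  For a pseudo holomorphic frame it
   gives nabla_{ebar_j} e_k (p) = 0, and (b), (c) follow by conjugation and the torsion condition.
   Metric compatibility then reads e_i[g_{j lbar}](p) = g(nabla_{e_i} e_j, ebar_l)(p), so (d) and (e)
   come from expanding in the basis {e_i, ebar_i} of the complexified tangent space and inverting
   the Gram matrix g_{k lbar}.  For (f), the field nabla_{ebar_j} e_k = [ebar_j, e_k]^{1,0} vanishes
   at p, so its derivative along e_i is a sum of brackets whose (1,0)-parts vanish by quasi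
   holomorphy.  Differentiating e_i[g_{k lbar}] along ebar_j and using (f) gives (g), and (h) is the
   special case nabla e_k (p) = 0. *)

section \<open>Smooth functions on an open set\<close>

lemma has_derivative_cong_open:
  assumes "open U" "x \<in> U" "\<And>y. y \<in> U \<Longrightarrow> f y = g y"
  shows "(f has_derivative D) (at x) \<longleftrightarrow> (g has_derivative D) (at x)"
  using has_derivative_transform_within_open[OF _ assms(1,2), where g=g]
    has_derivative_transform_within_open[OF _ assms(1,2), where g=f] assms(3) by metis

lemma frechet_derivative_cong_open:
  assumes "open U" "x \<in> U" "\<And>y. y \<in> U \<Longrightarrow> f y = g y"
  shows "frechet_derivative f (at x) = frechet_derivative g (at x)"
  unfolding frechet_derivative_def using has_derivative_cong_open[OF assms] by simp

lemma differentiable_cong_open: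
  assumes "open U" "x \<in> U" "\<And>y. y \<in> U \<Longrightarrow> f y = g y"
  shows "f differentiable (at x) \<longleftrightarrow> g differentiable (at x)"
  unfolding differentiable_def using has_derivative_cong_open[OF assms] by simp

lemma frechet_derivative_add_at:
  "f differentiable (at x) \<Longrightarrow> g differentiable (at x) \<Longrightarrow>
   frechet_derivative (\<lambda>y. f y + g y) (at x) = (\<lambda>h. frechet_derivative f (at x) h + frechet_derivative g (at x) h)"
  by (rule frechet_derivative_at[symmetric], intro has_derivative_add) (simp_all add: frechet_derivative_works)

lemma frechet_derivative_diff_at:
  "f differentiable (at x) \<Longrightarrow> g differentiable (at x) \<Longrightarrow>
   frechet_derivative (\<lambda>y. f y - g y) (at x) = (\<lambda>h. frechet_derivative f (at x) h - frechet_derivative g (at x) h)"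
  by (rule frechet_derivative_at[symmetric], intro has_derivative_diff) (simp_all add: frechet_derivative_works)

lemma frechet_derivative_mult_at:
  fixes f g :: "'a::real_normed_vector \<Rightarrow> 'b::real_normed_algebra"
  shows "f differentiable (at x) \<Longrightarrow> g differentiable (at x) \<Longrightarrow>
   frechet_derivative (\<lambda>y. f y * g y) (at x) = (\<lambda>h. f x * frechet_derivative g (at x) h + frechet_derivative f (at x) h * g x)"
  by (rule frechet_derivative_at[symmetric], intro has_derivative_mult) (simp_all add: frechet_derivative_works)

lemma frechet_derivative_cnj_at:
  fixes f :: "'a::real_normed_vector \<Rightarrow> complex"
  shows "f differentiable (at x) \<Longrightarrow>
   frechet_derivative (\<lambda>y. cnj (f y)) (at x) = (\<lambda>h. cnj (frechet_derivative f (at x) h))"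
  by (rule frechet_derivative_at[symmetric], intro has_derivative_cnj) (simp_all add: frechet_derivative_works)

lemma ah_Ck_cong:
  assumes "open U" "\<And>y. y \<in> U \<Longrightarrow> f y = g y"
  shows "ah_Ck k U f = ah_Ck k U g"
  using assms(2)
proof (induction k arbitrary: f g)
  case 0
  then show ?case by (auto intro: continuous_on_cong)
next
  case (Suc k)
  have "frechet_derivative f (at x) = frechet_derivative g (at x)" if "x \<in> U" for x
    using frechet_derivative_cong_open[OF assms(1) that] Suc.prems by blast
  then have "ah_Ck k U (\<lambda>x. frechet_derivative f (at x) (axis a 1)) =
             ah_Ck k U (\<lambda>x. frechet_derivative g (at x) (axis a 1))" for a
    by (intro Suc.IH) auto
  moreover have "f differentiable (at x) \<longleftrightarrow> g differentiable (at x)" if "x \<in> U" for x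
    using differentiable_cong_open[OF assms(1) that] Suc.prems by blast
  ultimately show ?case by simp
qed

lemma ah_Ck_Suc_imp_Ck: "ah_Ck (Suc k) U f \<Longrightarrow> ah_Ck k U f"
proof (induction k arbitrary: f)
  case 0
  then show ?case
    by (simp add: differentiable_imp_continuous_within continuous_at_imp_continuous_on)
qed simp

lemma ah_Ck_const: "ah_Ck k U (\<lambda>x. c)"
  by (induction k arbitrary: c) simp_all

lemma ah_Ck_add:
  "open U \<Longrightarrow> ah_Ck k U f \<Longrightarrow> ah_Ck k U g \<Longrightarrow> ah_Ck k U (\<lambda>x. f x + g x)"
proof (induction k arbitrary: f g)
  case 0
  then show ?case by (simp add: continuous_on_add)
next
  case (Suc k)
  have "ah_Ck k U (\<lambda>x. frechet_derivative (\<lambda>x. f x + g x) (at x) (axis a 1))" for a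
  proof -
    have "ah_Ck k U (\<lambda>x. frechet_derivative f (at x) (axis a 1) + frechet_derivative g (at x) (axis a 1))"
      using Suc by simp
    then show ?thesis
      using Suc.prems by (subst ah_Ck_cong[OF Suc.prems(1)]) (simp_all add: frechet_derivative_add_at)
  qed
  moreover have "\<forall>x\<in>U. (\<lambda>x. f x + g x) differentiable (at x)"
    using Suc.prems by (simp add: differentiable_add)
  ultimately show ?case by simp
qed

lemma ah_Ck_mult:
  "open U \<Longrightarrow> ah_Ck k U f \<Longrightarrow> ah_Ck k U g \<Longrightarrow> ah_Ck k U (\<lambda>x. f x * g x)"
proof (induction k arbitrary: f g)
  case 0
  then show ?case by (simp add: continuous_on_mult)
next
  case (Suc k)
  have "ah_Ck k U (\<lambda>x. frechet_derivative (\<lambda>x. f x * g x) (at x) (axis a 1))" for a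
  proof -
    have "ah_Ck k U f" "ah_Ck k U g"
      using Suc.prems ah_Ck_Suc_imp_Ck by blast+
    then have "ah_Ck k U (\<lambda>x. f x * frechet_derivative g (at x) (axis a 1)
                              + frechet_derivative f (at x) (axis a 1) * g x)"
      using Suc by (intro ah_Ck_add) simp_all
    then show ?thesis
      using Suc.prems by (subst ah_Ck_cong[OF Suc.prems(1)]) (simp_all add: frechet_derivative_mult_at)
  qed
  moreover have "\<forall>x\<in>U. (\<lambda>x. f x * g x) differentiable (at x)"
    using Suc.prems by (simp add: differentiable_mult)
  ultimately show ?case by simp
qed

lemma ah_Ck_cnj: "open U \<Longrightarrow> ah_Ck k U f \<Longrightarrow> ah_Ck k U (\<lambda>x. cnj (f x))"
proof (induction k arbitrary: f)
  case 0
  then show ?case by (simp add: continuous_on_cnj)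
next
  case (Suc k)
  have "ah_Ck k U (\<lambda>x. frechet_derivative (\<lambda>x. cnj (f x)) (at x) (axis a 1))" for a
  proof -
    have "ah_Ck k U (\<lambda>x. cnj (frechet_derivative f (at x) (axis a 1)))"
      using Suc by simp
    then show ?thesis
      using Suc.prems by (subst ah_Ck_cong[OF Suc.prems(1)]) (simp_all add: frechet_derivative_cnj_at)
  qed
  moreover have "\<forall>x\<in>U. (\<lambda>x. cnj (f x)) differentiable (at x)"
    using Suc.prems by (simp add: differentiable_cnj_iff)
  ultimately show ?case by simp
qed

lemma ah_smooth_differentiable: "ah_smooth U f \<Longrightarrow> x \<in> U \<Longrightarrow> f differentiable (at x)"
  unfolding ah_smooth_def by (metis ah_Ck.simps(2))

lemma ah_smooth_partial_derivative:
  "ah_smooth U f \<Longrightarrow> ah_smooth U (\<lambda>x. frechet_derivative f (at x) (axis a 1))"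
  unfolding ah_smooth_def by (metis ah_Ck.simps(2))

lemma ah_smooth_const [simp]: "ah_smooth U (\<lambda>x. c)"
  unfolding ah_smooth_def by (simp add: ah_Ck_const)

lemma ah_smooth_add: "open U \<Longrightarrow> ah_smooth U f \<Longrightarrow> ah_smooth U g \<Longrightarrow> ah_smooth U (\<lambda>x. f x + g x)"
  unfolding ah_smooth_def by (simp add: ah_Ck_add)

lemma ah_smooth_mult: "open U \<Longrightarrow> ah_smooth U f \<Longrightarrow> ah_smooth U g \<Longrightarrow> ah_smooth U (\<lambda>x. f x * g x)"
  unfolding ah_smooth_def by (simp add: ah_Ck_mult)

lemma ah_smooth_cnj: "open U \<Longrightarrow> ah_smooth U f \<Longrightarrow> ah_smooth U (\<lambda>x. cnj (f x))"
  unfolding ah_smooth_def by (simp add: ah_Ck_cnj)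

lemma ah_smooth_diff: "open U \<Longrightarrow> ah_smooth U f \<Longrightarrow> ah_smooth U g \<Longrightarrow> ah_smooth U (\<lambda>x. f x - g x)"
  using ah_smooth_add[of U f "\<lambda>x. -1 * g x"] ah_smooth_mult[of U "\<lambda>x. -1" g] by simp

lemma ah_smooth_sum:
  assumes "open U" "\<And>i. i \<in> S \<Longrightarrow> ah_smooth U (f i)"
  shows "ah_smooth U (\<lambda>x. \<Sum>i\<in>S. f i x)"
  using assms(2)
  by (induction S rule: infinite_finite_induct) (simp_all add: ah_smooth_add[OF assms(1)])

lemma vcnj_nth [simp]: "vcnj v $ c = cnj (v $ c)"
  unfolding vcnj_def by simp

lemma fcnj_nth [simp]: "fcnj X x $ c = cnj (X x $ c)"
  unfolding fcnj_def by simp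

lemma vcnj_vcnj [simp]: "vcnj (vcnj v) = v"
  by (simp add: vec_eq_iff)

lemma vcnj_zero [simp]: "vcnj 0 = 0"
  by (simp add: vec_eq_iff)

lemma vcnj_scale: "vcnj (c *s v) = cnj c *s vcnj v"
  by (simp add: vec_eq_iff)

lemma vcnj_sum: "vcnj (\<Sum>i\<in>S. f i) = (\<Sum>i\<in>S. vcnj (f i))"
  by (induction S rule: infinite_finite_induct) (simp_all add: vec_eq_iff)

lemma ah_field_smooth_nth: "ah_field U Y \<Longrightarrow> ah_smooth U (\<lambda>x. Y x $ c)"
  unfolding ah_field_def by blast

lemma ah_field_differentiable_nth: "ah_field U Y \<Longrightarrow> x \<in> U \<Longrightarrow> (\<lambda>y. Y y $ c) differentiable (at x)"
  by (rule ah_smooth_differentiable[OF ah_field_smooth_nth])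

lemma ah_dirc_cong:
  assumes "open U" "x \<in> U" "\<And>y. y \<in> U \<Longrightarrow> f y = g y"
  shows "ah_dirc v f x = ah_dirc v g x"
  unfolding ah_dirc_def using frechet_derivative_cong_open[OF assms] by simp

lemma ah_dirc_add:
  "f differentiable (at x) \<Longrightarrow> g differentiable (at x) \<Longrightarrow>
   ah_dirc v (\<lambda>y. f y + g y) x = ah_dirc v f x + ah_dirc v g x"
  unfolding ah_dirc_def by (simp add: frechet_derivative_add_at distrib_left sum.distrib)

lemma ah_dirc_diff:
  "f differentiable (at x) \<Longrightarrow> g differentiable (at x) \<Longrightarrow>
   ah_dirc v (\<lambda>y. f y - g y) x = ah_dirc v f x - ah_dirc v g x"
  unfolding ah_dirc_def by (simp add: frechet_derivative_diff_at right_diff_distrib sum_subtractf)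

lemma ah_dirc_cmult:
  "f differentiable (at x) \<Longrightarrow> ah_dirc v (\<lambda>y. c * f y) x = c * ah_dirc v f x"
  unfolding ah_dirc_def by (simp add: frechet_derivative_mult_at sum_distrib_left mult_ac)

lemma ah_dirc_cnj:
  "f differentiable (at x) \<Longrightarrow> ah_dirc (vcnj v) (\<lambda>y. cnj (f y)) x = cnj (ah_dirc v f x)"
  unfolding ah_dirc_def by (simp add: frechet_derivative_cnj_at)

lemma ah_dirv_nth [simp]: "ah_dirv v Y x $ c = ah_dirc v (\<lambda>y. Y y $ c) x"
  unfolding ah_dirv_def by simp

lemma ah_dirv_cong:
  assumes "open U" "x \<in> U" "\<And>y. y \<in> U \<Longrightarrow> Y y = Z y"
  shows "ah_dirv v Y x = ah_dirv v Z x"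
proof -
  have "ah_dirc v (\<lambda>y. Y y $ c) x = ah_dirc v (\<lambda>y. Z y $ c) x" for c
    by (rule ah_dirc_cong[OF assms(1,2)]) (simp add: assms(3))
  then show ?thesis by (simp add: vec_eq_iff)
qed

lemma ah_dirv_diff:
  "ah_field U Y \<Longrightarrow> ah_field U Z \<Longrightarrow> x \<in> U \<Longrightarrow>
   ah_dirv v (\<lambda>y. Y y - Z y) x = ah_dirv v Y x - ah_dirv v Z x"
  by (simp add: vec_eq_iff ah_dirc_diff ah_field_differentiable_nth)

lemma ah_dirv_scale:
  "ah_field U Y \<Longrightarrow> x \<in> U \<Longrightarrow> ah_dirv v (\<lambda>y. c *s Y y) x = c *s ah_dirv v Y x"
  by (simp add: vec_eq_iff ah_dirc_cmult ah_field_differentiable_nth)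

lemma ah_dirv_cnj:
  assumes "ah_field U Y" "x \<in> U"
  shows "ah_dirv (vcnj v) (fcnj Y) x = vcnj (ah_dirv v Y x)"
proof -
  have "ah_dirc (vcnj v) (\<lambda>y. cnj (Y y $ c)) x = cnj (ah_dirc v (\<lambda>y. Y y $ c) x)" for c
    by (rule ah_dirc_cnj) (rule ah_field_differentiable_nth[OF assms])
  then show ?thesis by (simp add: vec_eq_iff)
qed

lemma ah_dirv_diff_direction: "ah_dirv (v - w) Y x = ah_dirv v Y x - ah_dirv w Y x"
  by (simp add: vec_eq_iff ah_dirc_def left_diff_distrib sum_subtractf)

lemma ah_dirv_zero_direction [simp]: "ah_dirv 0 Y x = 0"
  by (simp add: vec_eq_iff ah_dirc_def)

lemma ah_lie_swap: "ah_lie X Y x = - ah_lie Y X x"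
  unfolding ah_lie_def by simp
section \<open>The complexified almost complex structure and metric\<close>

lemma Jc_nth: "Jc J x v $ c = (\<Sum>b\<in>UNIV. complex_of_real (J x $ c $ b) * v $ b)"
  unfolding Jc_def by simp

lemma Jc_zero [simp]: "Jc J x 0 = 0"
  by (simp add: Jc_nth vec_eq_iff)

lemma Jc_add: "Jc J x (v + w) = Jc J x v + Jc J x w"
  by (simp add: Jc_nth vec_eq_iff distrib_left sum.distrib)

lemma Jc_diff: "Jc J x (v - w) = Jc J x v - Jc J x w"
  by (simp add: Jc_nth vec_eq_iff right_diff_distrib sum_subtractf)

lemma Jc_scale: "Jc J x (c *s v) = c *s Jc J x v"
  by (simp add: Jc_nth vec_eq_iff sum_distrib_left mult_ac)

lemma Jc_sum: "Jc J x (\<Sum>i\<in>S. f i) = (\<Sum>i\<in>S. Jc J x (f i))"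
  by (induction S rule: infinite_finite_induct) (simp_all add: Jc_add vec_eq_iff Jc_nth)

lemma Jc_vcnj: "Jc J x (vcnj v) = vcnj (Jc J x v)"
  by (simp add: Jc_nth vec_eq_iff cnj_sum)

lemma Jc_Jc:
  assumes JJ: "J x ** J x = - mat 1"
  shows "Jc J x (Jc J x v) = - v"
proof -
  have JJ_entry: "(\<Sum>b\<in>UNIV. J x $ c $ b * J x $ b $ d) = (if c = d then -1 else 0)" for c d
    using arg_cong[OF JJ, of "\<lambda>M. M $ c $ d"] by (simp add: matrix_matrix_mult_def mat_def)
  have "Jc J x (Jc J x v) $ c = - v $ c" for c
  proof -
    have "Jc J x (Jc J x v) $ c =
          (\<Sum>d\<in>UNIV. complex_of_real (\<Sum>b\<in>UNIV. J x $ c $ b * J x $ b $ d) * v $ d)"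
      by (simp add: Jc_nth sum_distrib_left sum_distrib_right mult_ac) (rule sum.swap)
    also have "\<dots> = (\<Sum>d\<in>UNIV. if c = d then - v $ d else 0)"
      by (intro sum.cong) (auto simp: JJ_entry)
    finally show ?thesis by simp
  qed
  then show ?thesis by (simp add: vec_eq_iff)
qed

lemma proj10_add: "proj10 J x (v + w) = proj10 J x v + proj10 J x w"
  unfolding proj10_def by (simp add: Jc_add vec_eq_iff algebra_simps)

lemma proj10_fixes_10: "Jc J x w = \<i> *s w \<Longrightarrow> proj10 J x w = w"
  unfolding proj10_def by (simp add: vec_eq_iff algebra_simps)

lemma proj10_kills_01: "Jc J x w = (- \<i>) *s w \<Longrightarrow> proj10 J x w = 0"
  unfolding proj10_def by (simp add: vec_eq_iff algebra_simps)

lemma proj10_type_decomposition: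
  "Jc J x v = \<i> *s v \<Longrightarrow> Jc J x w = (- \<i>) *s w \<Longrightarrow> proj10 J x (v + w) = v"
  by (simp add: proj10_add proj10_fixes_10 proj10_kills_01)

lemma Jc_proj10: "J x ** J x = - mat 1 \<Longrightarrow> Jc J x (proj10 J x v) = \<i> *s proj10 J x v"
  unfolding proj10_def by (simp add: Jc_scale Jc_diff Jc_Jc vec_eq_iff algebra_simps)

lemma proj10_plus_cnj_proj10_cnj: "proj10 J x v + vcnj (proj10 J x (vcnj v)) = v"
  unfolding proj10_def by (simp add: Jc_vcnj vec_eq_iff algebra_simps)

lemma gc_add_left: "gc g x (v + w) z = gc g x v z + gc g x w z"
  unfolding gc_def by (simp add: distrib_right sum.distrib)

lemma gc_add_right: "gc g x z (v + w) = gc g x z v + gc g x z w"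
  unfolding gc_def by (simp add: distrib_left sum.distrib)

lemma gc_scale_left: "gc g x (c *s v) z = c * gc g x v z"
  unfolding gc_def by (simp add: sum_distrib_left mult_ac)

lemma gc_scale_right: "gc g x z (c *s v) = c * gc g x z v"
  unfolding gc_def by (simp add: sum_distrib_left mult_ac)

lemma gc_neg_left: "gc g x (- v) z = - gc g x v z"
  unfolding gc_def by (simp add: sum_negf)

lemma gc_zero_left [simp]: "gc g x 0 z = 0"
  unfolding gc_def by simp

lemma gc_zero_right [simp]: "gc g x z 0 = 0"
  unfolding gc_def by simp

lemma gc_sum_left: "gc g x (\<Sum>i\<in>S. f i) z = (\<Sum>i\<in>S. gc g x (f i) z)"
  by (induction S rule: infinite_finite_induct) (simp_all add: gc_add_left)

lemma gc_sum_right: "gc g x z (\<Sum>i\<in>S. f i) = (\<Sum>i\<in>S. gc g x z (f i))"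
  by (induction S rule: infinite_finite_induct) (simp_all add: gc_add_right)

lemma sum_swap_pairs:
  "(\<Sum>a\<in>A. \<Sum>b\<in>B. \<Sum>c\<in>C. \<Sum>d\<in>D. F a b c d) = (\<Sum>c\<in>C. \<Sum>d\<in>D. \<Sum>a\<in>A. \<Sum>b\<in>B. F a b c d)"
proof -
  have "(\<Sum>a\<in>A. \<Sum>b\<in>B. \<Sum>c\<in>C. \<Sum>d\<in>D. F a b c d) = (\<Sum>a\<in>A. \<Sum>c\<in>C. \<Sum>b\<in>B. \<Sum>d\<in>D. F a b c d)"
    by (rule sum.cong[OF refl], rule sum.swap)
  also have "\<dots> = (\<Sum>c\<in>C. \<Sum>a\<in>A. \<Sum>d\<in>D. \<Sum>b\<in>B. F a b c d)"
    by (subst sum.swap) (rule sum.cong[OF refl], rule sum.cong[OF refl], rule sum.swap)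
  also have "\<dots> = (\<Sum>c\<in>C. \<Sum>d\<in>D. \<Sum>a\<in>A. \<Sum>b\<in>B. F a b c d)"
    by (rule sum.cong[OF refl], rule sum.swap)
  finally show ?thesis .
qed

lemma gc_Jc_Jc:
  assumes J_isometry: "\<forall>v w. (J x *v v) \<bullet> (g x *v (J x *v w)) = v \<bullet> (g x *v w)"
  shows "gc g x (Jc J x v) (Jc J x w) = gc g x v w"
proof -
  have JgJ_entry: "(\<Sum>a\<in>UNIV. \<Sum>b\<in>UNIV. J x $ a $ c * g x $ a $ b * J x $ b $ d) = g x $ c $ d" for c d
  proof -
    have "column c (J x) \<bullet> (g x *v column d (J x)) = g x $ c $ d"
      using J_isometry[rule_format, of "axis c 1" "axis d 1"]
      by (simp add: matrix_vector_mult_basis inner_axis' column_def)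
    then show ?thesis
      by (simp add: column_def inner_vec_def matrix_vector_mult_def
          sum_distrib_left sum_distrib_right mult_ac)
  qed
  have "gc g x (Jc J x v) (Jc J x w) =
     (\<Sum>a\<in>UNIV. \<Sum>b\<in>UNIV. \<Sum>c\<in>UNIV. \<Sum>d\<in>UNIV.
        v $ c * complex_of_real (J x $ a $ c * g x $ a $ b * J x $ b $ d) * w $ d)"
    unfolding gc_def Jc_nth by (simp add: sum_distrib_left sum_distrib_right mult_ac)
  also have "\<dots> = (\<Sum>c\<in>UNIV. \<Sum>d\<in>UNIV.
        v $ c * complex_of_real (\<Sum>a\<in>UNIV. \<Sum>b\<in>UNIV. J x $ a $ c * g x $ a $ b * J x $ b $ d) * w $ d)"
    by (subst sum_swap_pairs) (simp add: sum_distrib_left sum_distrib_right)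
  also have "\<dots> = gc g x v w"
    unfolding gc_def JgJ_entry ..
  finally show ?thesis .
qed

lemma gc_eigen_eq_0:
  assumes "\<forall>v w. (J x *v v) \<bullet> (g x *v (J x *v w)) = v \<bullet> (g x *v w)"
    and "Jc J x v = c *s v" "Jc J x w = c *s w" "c * c \<noteq> 1"
  shows "gc g x v w = 0"
  using gc_Jc_Jc[of J x g v w] assms by (simp add: gc_scale_left gc_scale_right)

lemma gc_vcnj_self_neq_0:
  assumes pos: "\<forall>v. v \<noteq> 0 \<longrightarrow> v \<bullet> (g x *v v) > 0" and "v \<noteq> 0"
  shows "gc g x (vcnj v) v \<noteq> 0"
proof -
  define a where "a = (\<chi> c. Re (v $ c))"
  define b where "b = (\<chi> c. Im (v $ c))"
  have "Re (gc g x (vcnj v) v) = a \<bullet> (g x *v a) + b \<bullet> (g x *v b)"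
    unfolding gc_def a_def b_def
    by (simp add: Re_sum inner_vec_def matrix_vector_mult_def sum_distrib_left
        sum.distrib[symmetric] algebra_simps)
  moreover have "a \<noteq> 0 \<or> b \<noteq> 0"
    using \<open>v \<noteq> 0\<close> unfolding a_def b_def by (auto simp: vec_eq_iff complex_eq_iff)
  moreover have "a \<bullet> (g x *v a) \<ge> 0" "b \<bullet> (g x *v b) \<ge> 0"
    using pos by (metis inner_zero_left less_eq_real_def)+
  ultimately have "Re (gc g x (vcnj v) v) > 0"
    using pos by (smt (verit))
  then show ?thesis by auto
qed

lemma ah_fieldI: "(\<And>c. ah_smooth U (\<lambda>x. Y x $ c)) \<Longrightarrow> ah_field U Y"
  unfolding ah_field_def by blast

lemma ah_field_diff: "open U \<Longrightarrow> ah_field U X \<Longrightarrow> ah_field U Y \<Longrightarrow> ah_field U (\<lambda>x. X x - Y x)"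
  by (intro ah_fieldI) (simp add: ah_smooth_diff ah_field_smooth_nth)

lemma ah_field_scale: "open U \<Longrightarrow> ah_field U X \<Longrightarrow> ah_field U (\<lambda>x. c *s X x)"
  by (intro ah_fieldI) (simp add: ah_smooth_mult ah_field_smooth_nth)

lemma ah_field_fcnj: "open U \<Longrightarrow> ah_field U X \<Longrightarrow> ah_field U (fcnj X)"
  by (intro ah_fieldI) (simp add: ah_smooth_cnj ah_field_smooth_nth)

lemma ah_smooth_dirc:
  "open U \<Longrightarrow> ah_field U X \<Longrightarrow> ah_smooth U f \<Longrightarrow> ah_smooth U (\<lambda>x. ah_dirc (X x) f x)"
  unfolding ah_dirc_def
  by (intro ah_smooth_sum ah_smooth_mult ah_field_smooth_nth ah_smooth_partial_derivative)

lemma ah_field_lie: "open U \<Longrightarrow> ah_field U X \<Longrightarrow> ah_field U Y \<Longrightarrow> ah_field U (ah_lie X Y)"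
  unfolding ah_lie_def
  by (intro ah_field_diff ah_fieldI) (simp_all add: ah_smooth_dirc ah_field_smooth_nth)

lemma nablav_cong:
  assumes "open U" "x \<in> U" "\<And>y. y \<in> U \<Longrightarrow> Y y = Z y"
  shows "nablav Gam x v Y = nablav Gam x v Z"
  unfolding nablav_def using ah_dirv_cong[OF assms] assms by simp

lemma nablav_zero_direction [simp]: "nablav Gam x 0 Y = 0"
  unfolding nablav_def by (simp add: vec_eq_iff)

lemma nablav_at_zero: "Y x = 0 \<Longrightarrow> nablav Gam x v Y = ah_dirv v Y x"
  unfolding nablav_def by (simp add: vec_eq_iff)

lemma nablav_scale:
  "ah_field U Y \<Longrightarrow> x \<in> U \<Longrightarrow> nablav Gam x v (\<lambda>y. c *s Y y) = c *s nablav Gam x v Y"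
  unfolding nablav_def
  by (simp add: ah_dirv_scale vec_eq_iff sum_distrib_left mult_ac distrib_left)

lemma nablav_cnj:
  "ah_field U Y \<Longrightarrow> x \<in> U \<Longrightarrow> nablav Gam x (vcnj v) (fcnj Y) = vcnj (nablav Gam x v Y)"
  unfolding nablav_def
  by (simp add: ah_dirv_cnj vec_eq_iff cnj_sum)
section \<open>The canonical connection\<close>

locale almost_chern =
  fixes U :: "(real^'m) set" and J g :: "real^'m \<Rightarrow> real^'m^'m"
    and Gam :: "real^'m \<Rightarrow> 'm \<Rightarrow> 'm \<Rightarrow> 'm \<Rightarrow> real"
  assumes almost_hermitian: "almost_hermitian U J g"
    and canonical: "canonical_connection U J g Gam"
begin

lemma open_U: "open U"
  using almost_hermitian unfolding almost_hermitian_def by blast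

lemma J_smooth: "ah_smooth U (\<lambda>x. complex_of_real (J x $ a $ b))"
  using almost_hermitian unfolding almost_hermitian_def by blast

lemma g_smooth: "ah_smooth U (\<lambda>x. complex_of_real (g x $ a $ b))"
  using almost_hermitian unfolding almost_hermitian_def by blast

lemma J_squared: "x \<in> U \<Longrightarrow> J x ** J x = - mat 1"
  using almost_hermitian unfolding almost_hermitian_def by blast

lemma g_positive: "x \<in> U \<Longrightarrow> \<forall>v. v \<noteq> 0 \<longrightarrow> v \<bullet> (g x *v v) > 0"
  using almost_hermitian unfolding almost_hermitian_def by blast

lemma J_isometry: "x \<in> U \<Longrightarrow> \<forall>v w. (J x *v v) \<bullet> (g x *v (J x *v w)) = v \<bullet> (g x *v w)"
  using almost_hermitian unfolding almost_hermitian_def by blast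

lemma Gam_smooth: "ah_smooth U (\<lambda>x. complex_of_real (Gam x a b c))"
  using canonical unfolding canonical_connection_def by blast

lemma nabla_metric:
  "ah_field U Y \<Longrightarrow> ah_field U Z \<Longrightarrow> x \<in> U \<Longrightarrow>
   ah_dirc v (\<lambda>y. gc g y (Y y) (Z y)) x = gc g x (nablav Gam x v Y) (Z x) + gc g x (Y x) (nablav Gam x v Z)"
  using canonical unfolding canonical_connection_def by blast

lemma nabla_Jc: "ah_field U Y \<Longrightarrow> x \<in> U \<Longrightarrow> nablav Gam x v (\<lambda>y. Jc J y (Y y)) = Jc J x (nablav Gam x v Y)"
  using canonical unfolding canonical_connection_def by blast

lemma torsion_10_01: "field10 U J X \<Longrightarrow> field10 U J Y \<Longrightarrow> x \<in> U \<Longrightarrow> torsion Gam X (fcnj Y) x = 0"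
  using canonical unfolding canonical_connection_def by blast

lemma ah_field_nabla: "ah_field U X \<Longrightarrow> ah_field U Y \<Longrightarrow> ah_field U (nabla Gam X Y)"
  unfolding nabla_def nablav_def
  by (intro ah_fieldI, simp,
      intro ah_smooth_add ah_smooth_dirc ah_smooth_sum ah_smooth_mult ah_field_smooth_nth Gam_smooth open_U)
     (simp_all add: ah_field_def)

lemma ah_field_Jc: "ah_field U X \<Longrightarrow> ah_field U (\<lambda>x. Jc J x (X x))"
  unfolding Jc_def
  by (intro ah_fieldI, simp, intro ah_smooth_sum ah_smooth_mult ah_field_smooth_nth J_smooth open_U)

lemma ah_field_proj10: "ah_field U X \<Longrightarrow> ah_field U (\<lambda>x. proj10 J x (X x))"
  unfolding proj10_def by (intro ah_field_scale ah_field_diff ah_field_Jc open_U)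

lemma ah_smooth_gc: "ah_field U X \<Longrightarrow> ah_field U Y \<Longrightarrow> ah_smooth U (\<lambda>x. gc g x (X x) (Y x))"
  unfolding gc_def by (intro ah_smooth_sum ah_smooth_mult ah_field_smooth_nth g_smooth open_U)

lemma field10_field: "field10 U J X \<Longrightarrow> ah_field U X"
  unfolding field10_def by blast

lemma field10_Jc: "field10 U J X \<Longrightarrow> x \<in> U \<Longrightarrow> Jc J x (X x) = \<i> *s X x"
  unfolding field10_def by blast

lemma field10_Jc_fcnj: "field10 U J X \<Longrightarrow> x \<in> U \<Longrightarrow> Jc J x (fcnj X x) = (- \<i>) *s fcnj X x"
  using field10_Jc[of X x] unfolding fcnj_def by (simp add: Jc_vcnj vcnj_scale)

lemma ah_field_fcnj10: "field10 U J X \<Longrightarrow> ah_field U (fcnj X)"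
  by (intro ah_field_fcnj open_U field10_field)

lemma gc_10_10: "x \<in> U \<Longrightarrow> Jc J x v = \<i> *s v \<Longrightarrow> Jc J x w = \<i> *s w \<Longrightarrow> gc g x v w = 0"
  by (rule gc_eigen_eq_0[OF J_isometry, where c = \<i>]) simp_all

lemma gc_01_01: "x \<in> U \<Longrightarrow> Jc J x v = (- \<i>) *s v \<Longrightarrow> Jc J x w = (- \<i>) *s w \<Longrightarrow> gc g x v w = 0"
  by (rule gc_eigen_eq_0[OF J_isometry, where c = "- \<i>"]) simp_all

lemma nablav_preserves_eigenfield:
  assumes "ah_field U W" "\<And>y. y \<in> U \<Longrightarrow> Jc J y (W y) = c *s W y" "x \<in> U"
  shows "Jc J x (nablav Gam x v W) = c *s nablav Gam x v W"
proof -
  have "Jc J x (nablav Gam x v W) = nablav Gam x v (\<lambda>y. Jc J y (W y))"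
    using nabla_Jc[OF assms(1,3)] by simp
  also have "\<dots> = nablav Gam x v (\<lambda>y. c *s W y)"
    by (rule nablav_cong[OF open_U assms(3)]) (simp add: assms(2))
  also have "\<dots> = c *s nablav Gam x v W"
    by (rule nablav_scale[OF assms(1,3)])
  finally show ?thesis .
qed

lemma field10_proj10: "ah_field U X \<Longrightarrow> field10 U J (\<lambda>x. proj10 J x (X x))"
  unfolding field10_def by (simp add: ah_field_proj10 Jc_proj10 J_squared)

(* Write L^{1,0} = L - Vbar with V = (Lbar)^{1,0}; then W(x)[L^{1,0}] is a sum of two brackets
   plus L^{1,0}(x)[W], which vanishes. *)
lemma ah_dirv_proj10_at_zero:
  assumes L: "ah_field U L" and W: "ah_field U W" and x: "x \<in> U"
    and zero: "proj10 J x (L x) = 0"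
  shows "ah_dirv (W x) (\<lambda>y. proj10 J y (L y)) x =
    ah_lie W L x + ah_lie (fcnj (\<lambda>y. proj10 J y (vcnj (L y)))) W x"
proof -
  define V where "V = (\<lambda>y. proj10 J y (vcnj (L y)))"
  have V_field: "ah_field U (fcnj V)"
    unfolding V_def
    by (intro ah_field_fcnj open_U ah_field_proj10 ah_field_fcnj[OF open_U L, unfolded fcnj_def])
  have L10_eq: "(\<lambda>y. proj10 J y (L y)) = (\<lambda>y. L y - fcnj V y)"
    using proj10_plus_cnj_proj10_cnj[of J _ "L _"]
    unfolding V_def fcnj_def by (simp add: fun_eq_iff algebra_simps)
  have "ah_dirv (W x) (\<lambda>y. proj10 J y (L y)) x = ah_dirv (W x) L x - ah_dirv (W x) (fcnj V) x"
    unfolding L10_eq by (rule ah_dirv_diff[OF L V_field x])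
  also have "\<dots> = ah_lie W L x + ah_lie (fcnj V) W x + ah_dirv (L x - fcnj V x) W x"
    unfolding ah_lie_def ah_dirv_diff_direction by simp
  finally show ?thesis
    using zero L10_eq unfolding V_def by (metis ah_dirv_zero_direction add_0_right)
qed

(* Take (1,0)-parts in nabla_{Xbar} Y = nabla_Y Xbar + [Xbar, Y]: the left side is of type (1,0)
   and nabla_Y Xbar of type (0,1). *)
lemma nabla_cnj_eq_proj10_lie:
  assumes X: "field10 U J X" and Y: "field10 U J Y" and x: "x \<in> U"
  shows "nabla Gam (fcnj X) Y x = proj10 J x (ah_lie (fcnj X) Y x)"
proof -
  have "nabla Gam (fcnj X) Y x = nabla Gam Y (fcnj X) x + ah_lie (fcnj X) Y x"
    using torsion_10_01[OF Y X x] ah_lie_swap[of Y "fcnj X" x]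
    unfolding torsion_def by (simp add: algebra_simps)
  moreover have "Jc J x (nabla Gam (fcnj X) Y x) = \<i> *s nabla Gam (fcnj X) Y x"
    unfolding nabla_def by (rule nablav_preserves_eigenfield[OF field10_field[OF Y] field10_Jc[OF Y] x])
  moreover have "Jc J x (nabla Gam Y (fcnj X) x) = (- \<i>) *s nabla Gam Y (fcnj X) x"
    unfolding nabla_def
    by (rule nablav_preserves_eigenfield[OF ah_field_fcnj10[OF X] field10_Jc_fcnj[OF X] x])
  ultimately show ?thesis
    by (metis proj10_add proj10_fixes_10 proj10_kills_01 add_0)
qed

end
section \<open>Pseudo holomorphic frames\<close>

lemma frameE_Inl [simp]: "frameE e (Inl i) = e i"
  unfolding frameE_def by simp

lemma frameE_Inr [simp]: "frameE e (Inr i) = fcnj (e i)"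
  unfolding frameE_def by simp

locale pseudo_holomorphic_frame = almost_chern U J g Gam
  for U :: "(real^'m) set" and J g :: "real^'m \<Rightarrow> real^'m^'m"
    and Gam :: "real^'m \<Rightarrow> 'm \<Rightarrow> 'm \<Rightarrow> 'm \<Rightarrow> real" +
  fixes e :: "'n::finite \<Rightarrow> real^'m \<Rightarrow> complex^'m" and p :: "real^'m"
  assumes dim: "CARD('m) = 2 * CARD('n)"
    and p_in_U: "p \<in> U"
    and frame: "frame10 U J e"
    and frame_pseudo_hol: "\<forall>i. pseudo_hol U J (e i) p"
begin

lemma frame_field10: "field10 U J (e i)"
  using frame unfolding frame10_def by blast

lemma frame_field: "ah_field U (e i)"
  by (rule field10_field[OF frame_field10])

lemma cnj_frame_field: "ah_field U (fcnj (e i))"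
  by (rule ah_field_fcnj10[OF frame_field10])

lemma frame_independent: "x \<in> U \<Longrightarrow> (\<Sum>i\<in>UNIV. c i *s e i x) = 0 \<Longrightarrow> c i = 0"
  using frame unfolding frame10_def by blast

lemma proj10_lie_cnj_frame: "field10 U J X \<Longrightarrow> proj10 J p (ah_lie (fcnj X) (e i) p) = 0"
  using frame_pseudo_hol unfolding pseudo_hol_def by blast

lemma nabla_cnj_frame_frame: "nabla Gam (fcnj (e j)) (e k) p = 0"
  using nabla_cnj_eq_proj10_lie[OF frame_field10 frame_field10 p_in_U]
  by (simp add: proj10_lie_cnj_frame[OF frame_field10])

lemma nabla_frame_cnj_frame: "nabla Gam (e j) (fcnj (e k)) p = 0"
proof -
  have "nabla Gam (e j) (fcnj (e k)) p = nablav Gam p (vcnj (fcnj (e j) p)) (fcnj (e k))"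
    unfolding nabla_def fcnj_def by simp
  also have "\<dots> = vcnj (nabla Gam (fcnj (e j)) (e k) p)"
    unfolding nabla_def by (rule nablav_cnj[OF frame_field p_in_U])
  finally show ?thesis
    by (simp add: nabla_cnj_frame_frame)
qed

lemma lie_frame_cnj_frame: "ah_lie (e j) (fcnj (e k)) p = 0"
  using torsion_10_01[OF frame_field10 frame_field10 p_in_U, of j k]
  unfolding torsion_def by (simp add: nabla_cnj_frame_frame nabla_frame_cnj_frame)

(* On U, nabla_{ebar_j} e_k = [ebar_j, e_k]^{1,0}, a field of type (1,0) vanishing at p. *)
lemma nabla_frame_nabla_cnj_frame_frame:
  assumes quasi: "\<forall>i. quasi_hol U J (e i) p"
  shows "nabla Gam (e i) (nabla Gam (fcnj (e j)) (e k)) p = 0"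
proof -
  define Z where "Z = nabla Gam (fcnj (e j)) (e k)"
  define L where "L = ah_lie (fcnj (e j)) (e k)"
  have L_field: "ah_field U L"
    unfolding L_def by (intro ah_field_lie open_U cnj_frame_field frame_field)
  have Z_eq: "Z y = proj10 J y (L y)" if "y \<in> U" for y
    unfolding Z_def L_def by (rule nabla_cnj_eq_proj10_lie[OF frame_field10 frame_field10 that])
  have Z_p: "Z p = 0"
    unfolding Z_def by (rule nabla_cnj_frame_frame)
  have "nabla Gam (e i) Z p = ah_dirv (e i p) Z p"
    unfolding nabla_def by (rule nablav_at_zero[of Z, OF Z_p])
  also have "\<dots> = ah_dirv (e i p) (\<lambda>y. proj10 J y (L y)) p"
    by (rule ah_dirv_cong[OF open_U p_in_U Z_eq])
  also have "\<dots> = ah_lie (e i) L p + ah_lie (fcnj (\<lambda>y. proj10 J y (vcnj (L y)))) (e i) p"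
    using Z_p Z_eq[OF p_in_U] by (intro ah_dirv_proj10_at_zero L_field frame_field p_in_U) simp
  finally have "nabla Gam (e i) Z p = \<dots>" .
  moreover have "proj10 J p (ah_lie (e i) L p) = 0"
    using quasi frame_pseudo_hol frame_field10 unfolding quasi_hol_def L_def by blast
  moreover have "proj10 J p (ah_lie (fcnj (\<lambda>y. proj10 J y (vcnj (L y)))) (e i) p) = 0"
    using proj10_lie_cnj_frame[OF field10_proj10[OF ah_field_fcnj[OF open_U L_field]]]
    unfolding fcnj_def .
  moreover have "Jc J p (nabla Gam (e i) Z p) = \<i> *s nabla Gam (e i) Z p"
    unfolding nabla_def
  proof (rule nablav_preserves_eigenfield[OF _ _ p_in_U])
    show "ah_field U Z"
      unfolding Z_def by (intro ah_field_nabla cnj_frame_field frame_field)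
    show "Jc J y (Z y) = \<i> *s Z y" if "y \<in> U" for y
      unfolding Z_def nabla_def
      by (rule nablav_preserves_eigenfield[OF frame_field field10_Jc[OF frame_field10] that])
  qed
  ultimately show ?thesis
    unfolding Z_def by (metis proj10_fixes_10 proj10_add add_0)
qed

lemma sum_frameE:
  "(\<Sum>D\<in>UNIV. c D *s frameE e D x) =
   (\<Sum>i\<in>UNIV. c (Inl i) *s e i x) + (\<Sum>i\<in>UNIV. c (Inr i) *s fcnj (e i) x)"
  using sum.Plus[of "UNIV :: 'n set" "UNIV :: 'n set" "\<lambda>D. c D *s frameE e D x"]
  by (simp add: UNIV_Plus_UNIV)

lemma Jc_sum_frame: "Jc J p (\<Sum>i\<in>UNIV. c i *s e i p) = \<i> *s (\<Sum>i\<in>UNIV. c i *s e i p)"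
  by (simp add: Jc_sum Jc_scale field10_Jc[OF frame_field10 p_in_U] vec_eq_iff sum_distrib_left mult_ac)

lemma Jc_sum_cnj_frame:
  "Jc J p (\<Sum>i\<in>UNIV. c i *s fcnj (e i) p) = (- \<i>) *s (\<Sum>i\<in>UNIV. c i *s fcnj (e i) p)"
  by (simp add: Jc_sum Jc_scale field10_Jc_fcnj[OF frame_field10 p_in_U] vec_eq_iff sum_distrib_left
      mult_ac sum_negf)

lemma frameE_coeff_Inr_eq_0:
  assumes w: "w = (\<Sum>D\<in>UNIV. c D *s frameE e D p)" and type10: "Jc J p w = \<i> *s w"
  shows "c (Inr i) = 0"
proof -
  have "w = (\<Sum>i\<in>UNIV. c (Inl i) *s e i p)"
    using proj10_fixes_10[OF type10] proj10_type_decomposition[OF Jc_sum_frame Jc_sum_cnj_frame]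
    unfolding w sum_frameE by simp
  then have "(\<Sum>i\<in>UNIV. c (Inr i) *s fcnj (e i) p) = 0"
    using w sum_frameE by simp
  moreover have "vcnj (\<Sum>i\<in>UNIV. c (Inr i) *s fcnj (e i) p) = (\<Sum>i\<in>UNIV. cnj (c (Inr i)) *s e i p)"
    by (simp add: vcnj_sum vcnj_scale fcnj_def)
  ultimately have "(\<Sum>i\<in>UNIV. cnj (c (Inr i)) *s e i p) = 0"
    by simp
  then show ?thesis
    using frame_independent[OF p_in_U] by (metis complex_cnj_zero_iff)
qed

lemma frameE_independent:
  assumes "(\<Sum>D\<in>UNIV. c D *s frameE e D p) = 0"
  shows "c D = 0"
proof -
  have Inr: "c (Inr i) = 0" for i
    using frameE_coeff_Inr_eq_0[OF assms[symmetric]] by simp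
  then have "(\<Sum>i\<in>UNIV. c (Inl i) *s e i p) = 0"
    using assms by (simp add: sum_frameE)
  then show ?thesis
    using frame_independent[OF p_in_U] Inr by (cases D) auto
qed

lemma inj_frameE: "inj (\<lambda>D. frameE e D p)"
proof (rule injI)
  fix D1 D2 assume eq: "frameE e D1 p = frameE e D2 p"
  show "D1 = D2"
  proof (rule ccontr)
    assume ne: "D1 \<noteq> D2"
    define c where "c = (\<lambda>D. if D = D1 then (1::complex) else if D = D2 then -1 else 0)"
    have "(\<Sum>D\<in>UNIV. c D *s frameE e D p) = (\<Sum>D\<in>{D1, D2}. c D *s frameE e D p)"
      by (rule sum.mono_neutral_right) (auto simp: c_def)
    also have "\<dots> = 0"
      using ne eq by (simp add: c_def vec_eq_iff)
    finally have "c D1 = 0"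
      by (rule frameE_independent)
    then show False by (simp add: c_def)
  qed
qed

(* The only use of CARD('m) = 2 * CARD('n): the 2n independent vectors e_i(p), ebar_i(p) span. *)
lemma frameE_spans: "\<exists>c. w = (\<Sum>D\<in>UNIV. c D *s frameE e D p)"
proof -
  define B where "B = range (\<lambda>D. frameE e D p)"
  have B_finite: "finite B"
    unfolding B_def by simp
  have sum_B: "(\<Sum>v\<in>B. u v *s v) = (\<Sum>D\<in>UNIV. u (frameE e D p) *s frameE e D p)" for u
    unfolding B_def by (simp add: sum.reindex[OF inj_frameE])
  have "vec.independent B"
    unfolding vec.dependent_finite[OF B_finite]
  proof
    assume "\<exists>u. (\<exists>v\<in>B. u v \<noteq> 0) \<and> (\<Sum>v\<in>B. u v *s v) = 0"
    then obtain u D where "u (frameE e D p) \<noteq> 0" "(\<Sum>v\<in>B. u v *s v) = 0"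
      unfolding B_def by blast
    then show False
      using frameE_independent[of "\<lambda>D. u (frameE e D p)" D] unfolding sum_B by blast
  qed
  moreover have "card B = vec.dim (UNIV :: (complex^'m) set)"
    unfolding vec_dim_card B_def card_image[OF inj_frameE] dim by (simp add: card_Plus)
  ultimately have "w \<in> vec.span B"
    using vec.card_eq_dim[of B UNIV] B_finite by blast
  then obtain u where "w = (\<Sum>v\<in>B. u v *s v)"
    unfolding vec.span_finite[OF B_finite] by blast
  then show ?thesis
    unfolding sum_B by (intro exI[of _ "\<lambda>D. u (frameE e D p)"])
qed

lemma chr_eqI:
  assumes "nabla Gam (frameE e A) (frameE e B) p = (\<Sum>D\<in>UNIV. c D *s frameE e D p)"
  shows "chr Gam e A B C p = c C"
proof -
  have "(THE c. nabla Gam (frameE e A) (frameE e B) p = (\<Sum>D\<in>UNIV. c D *s frameE e D p)) = c"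
  proof (rule the_equality)
    fix c' assume "nabla Gam (frameE e A) (frameE e B) p = (\<Sum>D\<in>UNIV. c' D *s frameE e D p)"
    then have "(\<Sum>D\<in>UNIV. (c' D - c D) *s frameE e D p) = 0"
      using assms by (simp add: vec_eq_iff left_diff_distrib sum_subtractf)
    then show "c' = c"
      using frameE_independent by fastforce
  qed (rule assms)
  then show ?thesis
    unfolding chr_def by simp
qed

lemma gfr_eq_gc: "gfr g e m l x = gc g x (e m x) (fcnj (e l) x)"
  by (simp add: gfr_def fcnj_def)

lemma gram_injective:
  assumes "(\<chi> m l. gfr g e m l p) *v x = 0"
  shows "x = 0"
proof -
  define w where "w = (\<Sum>l\<in>UNIV. cnj (x $ l) *s e l p)"
  have "gc g p (e m p) (vcnj w) = ((\<chi> m l. gfr g e m l p) *v x) $ m" for m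
    unfolding w_def gfr_def
    by (simp add: vcnj_sum vcnj_scale gc_sum_right gc_scale_right matrix_vector_mult_def mult_ac)
  then have "gc g p (vcnj (vcnj w)) (vcnj w) = 0"
    unfolding w_def using assms by (simp add: gc_sum_left gc_scale_left)
  then have "vcnj w = 0"
    using gc_vcnj_self_neq_0[of g p "vcnj w"] g_positive[OF p_in_U] by blast
  then have "w = 0"
    by (metis vcnj_vcnj vcnj_zero)
  then have "cnj (x $ l) = 0" for l
    using frame_independent[OF p_in_U, of "\<lambda>l. cnj (x $ l)"] unfolding w_def by blast
  then show ?thesis by (simp add: vec_eq_iff)
qed

lemma ginv_eq_inverse_gram:
  assumes BG: "B ** (\<chi> m l. gfr g e m l p) = mat 1"
  shows "ginv g e p = (\<lambda>k l. B $ l $ k)"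
  unfolding ginv_def
proof (rule the_equality)
  have "(\<chi> m l. gfr g e m l p) ** B = mat 1"
    using BG matrix_left_right_inverse by blast
  then show "\<forall>k m. (\<Sum>l\<in>UNIV. B $ l $ k * gfr g e m l p) = (if k = m then 1 else 0)"
    by (simp add: vec_eq_iff matrix_matrix_mult_def mat_def mult_ac)
next
  fix H assume H: "\<forall>k m. (\<Sum>l\<in>UNIV. H k l * gfr g e m l p) = (if k = m then 1 else 0)"
  have "(\<chi> m l. gfr g e m l p) ** (\<chi> l k. H k l) = mat 1"
    using H by (simp add: vec_eq_iff matrix_matrix_mult_def mat_def mult_ac)
  then have "(\<chi> l k. H k l) = B"
    by (metis BG matrix_mul_assoc matrix_mul_lid matrix_mul_rid)
  then show "H = (\<lambda>k l. B $ l $ k)"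
    by (auto simp: vec_eq_iff)
qed

lemma ginv_gfr:
  "(\<Sum>l\<in>UNIV. ginv g e p k l * gfr g e m l p) = (if k = m then 1 else 0)"
  "(\<Sum>l\<in>UNIV. ginv g e p l k * gfr g e l m p) = (if k = m then 1 else 0)"
proof -
  obtain B where BG: "B ** (\<chi> m l. gfr g e m l p) = mat 1"
    using matrix_left_invertible_ker gram_injective by blast
  moreover have "(\<chi> m l. gfr g e m l p) ** B = mat 1"
    using BG matrix_left_right_inverse by blast
  ultimately show "(\<Sum>l\<in>UNIV. ginv g e p k l * gfr g e m l p) = (if k = m then 1 else 0)"
    "(\<Sum>l\<in>UNIV. ginv g e p l k * gfr g e l m p) = (if k = m then 1 else 0)"
    unfolding ginv_eq_inverse_gram[OF BG]
    by (simp_all add: vec_eq_iff matrix_matrix_mult_def mat_def mult_ac)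
qed

lemma frameE_coeff_Inl:
  assumes w: "w = (\<Sum>D\<in>UNIV. c D *s frameE e D p)"
  shows "c (Inl k) = (\<Sum>l\<in>UNIV. gc g p w (fcnj (e l) p) * ginv g e p k l)"
proof -
  have "gc g p (fcnj (e m) p) (fcnj (e l) p) = 0" for m l
    by (rule gc_01_01[OF p_in_U field10_Jc_fcnj[OF frame_field10 p_in_U] field10_Jc_fcnj[OF frame_field10 p_in_U]])
  then have "gc g p w (fcnj (e l) p) = (\<Sum>m\<in>UNIV. c (Inl m) * gfr g e m l p)" for l
    unfolding w sum_frameE by (simp add: gc_add_left gc_sum_left gc_scale_left gfr_eq_gc)
  then have "(\<Sum>l\<in>UNIV. gc g p w (fcnj (e l) p) * ginv g e p k l)
      = (\<Sum>m\<in>UNIV. c (Inl m) * (\<Sum>l\<in>UNIV. ginv g e p k l * gfr g e m l p))"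
    by (simp add: sum_distrib_left sum_distrib_right mult_ac) (rule sum.swap)
  also have "\<dots> = c (Inl k)"
    by (simp add: ginv_gfr if_distrib[of "\<lambda>x. _ * x"] cong: if_cong)
  finally show ?thesis ..
qed

lemma frameE_coeff_Inr:
  assumes w: "w = (\<Sum>D\<in>UNIV. c D *s frameE e D p)"
  shows "c (Inr k) = (\<Sum>l\<in>UNIV. gc g p (e l p) w * ginv g e p l k)"
proof -
  have "gc g p (e l p) (e m p) = 0" for m l
    by (rule gc_10_10[OF p_in_U field10_Jc[OF frame_field10 p_in_U] field10_Jc[OF frame_field10 p_in_U]])
  then have "gc g p (e l p) w = (\<Sum>m\<in>UNIV. c (Inr m) * gfr g e l m p)" for l
    unfolding w sum_frameE by (simp add: gc_add_right gc_sum_right gc_scale_right gfr_eq_gc)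
  then have "(\<Sum>l\<in>UNIV. gc g p (e l p) w * ginv g e p l k)
      = (\<Sum>m\<in>UNIV. c (Inr m) * (\<Sum>l\<in>UNIV. ginv g e p l k * gfr g e l m p))"
    by (simp add: sum_distrib_left sum_distrib_right mult_ac) (rule sum.swap)
  also have "\<dots> = c (Inr k)"
    by (simp add: ginv_gfr if_distrib[of "\<lambda>x. _ * x"] cong: if_cong)
  finally show ?thesis ..
qed

lemma chr_Inl:
  "chr Gam e A B (Inl k) p =
   (\<Sum>l\<in>UNIV. gc g p (nabla Gam (frameE e A) (frameE e B) p) (fcnj (e l) p) * ginv g e p k l)"
proof -
  obtain c where "nabla Gam (frameE e A) (frameE e B) p = (\<Sum>D\<in>UNIV. c D *s frameE e D p)"
    using frameE_spans by blast
  then show ?thesis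
    by (simp add: chr_eqI frameE_coeff_Inl)
qed

lemma chr_Inr:
  "chr Gam e A B (Inr k) p =
   (\<Sum>l\<in>UNIV. gc g p (e l p) (nabla Gam (frameE e A) (frameE e B) p) * ginv g e p l k)"
proof -
  obtain c where "nabla Gam (frameE e A) (frameE e B) p = (\<Sum>D\<in>UNIV. c D *s frameE e D p)"
    using frameE_spans by blast
  then show ?thesis
    by (simp add: chr_eqI frameE_coeff_Inr)
qed

lemma gc_type10_expansion:
  assumes type10: "Jc J p w = \<i> *s w"
  shows "gc g p w z =
    (\<Sum>a\<in>UNIV. \<Sum>b\<in>UNIV. ginv g e p a b * gc g p w (fcnj (e b) p) * gc g p (e a p) z)"
proof -
  obtain c where c: "w = (\<Sum>D\<in>UNIV. c D *s frameE e D p)"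
    using frameE_spans by blast
  then have "w = (\<Sum>a\<in>UNIV. c (Inl a) *s e a p)"
    using frameE_coeff_Inr_eq_0[OF c type10] by (simp add: sum_frameE)
  then have "gc g p w z = (\<Sum>a\<in>UNIV. c (Inl a) * gc g p (e a p) z)"
    by (simp add: gc_sum_left gc_scale_left)
  then show ?thesis
    unfolding frameE_coeff_Inl[OF c] by (simp add: sum_distrib_left sum_distrib_right mult_ac)
qed

lemma ah_vf_gfr:
  assumes "ah_field U X" "x \<in> U"
  shows "ah_vf X (gfr g e j l) x =
    gc g x (nabla Gam X (e j) x) (fcnj (e l) x) + gc g x (e j x) (nabla Gam X (fcnj (e l)) x)"
  unfolding ah_vf_def nabla_def gfr_eq_gc[abs_def]
  by (rule nabla_metric[OF frame_field cnj_frame_field assms(2)])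

lemma ah_vf_frame_gfr: "ah_vf (e i) (gfr g e j l) p = gc g p (nabla Gam (e i) (e j) p) (fcnj (e l) p)"
  using ah_vf_gfr[OF frame_field p_in_U] by (simp add: nabla_frame_cnj_frame)

lemma ah_vf_cnj_frame_gfr:
  "ah_vf (fcnj (e i)) (gfr g e l j) p = gc g p (e l p) (nabla Gam (fcnj (e i)) (fcnj (e j)) p)"
  using ah_vf_gfr[OF cnj_frame_field p_in_U] by (simp add: nabla_cnj_frame_frame)

lemma chr_cnj_frame_frame_Inl: "chr Gam e (Inr j) (Inl k) (Inl l) p = 0"
  by (simp add: chr_Inl nabla_cnj_frame_frame)

lemma chr_frame_cnj_frame_Inr: "chr Gam e (Inl j) (Inr k) (Inr l) p = 0"
  by (simp add: chr_Inr nabla_frame_cnj_frame)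

lemma chr_frame_frame_Inl:
  "chr Gam e (Inl i) (Inl j) (Inl k) p = (\<Sum>l\<in>UNIV. ah_vf (e i) (gfr g e j l) p * ginv g e p k l)"
  by (simp add: chr_Inl ah_vf_frame_gfr)

lemma chr_cnj_frame_cnj_frame_Inr:
  "chr Gam e (Inr i) (Inr j) (Inr k) p = (\<Sum>l\<in>UNIV. ah_vf (fcnj (e i)) (gfr g e l j) p * ginv g e p l k)"
  by (simp add: chr_Inr ah_vf_cnj_frame_gfr)

lemma curv_quasi_hol:
  assumes "\<forall>i. quasi_hol U J (e i) p"
  shows "curv g Gam e i j k l p =
    - gc g p (nabla Gam (fcnj (e j)) (nabla Gam (e i) (e k)) p) (fcnj (e l) p)"
proof -
  have "nabla Gam (ah_lie (e i) (fcnj (e j))) (e k) p = 0"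
    by (simp add: nabla_def lie_frame_cnj_frame)
  then show ?thesis
    unfolding curv_def fcnj_def[of "e l"]
    by (simp add: nabla_frame_nabla_cnj_frame_frame[OF assms] gc_neg_left)
qed

(* Of the four terms of ebar_j[e_i[g_{k lbar}]] given by metric compatibility, two vanish at p:
   nabla_{ebar_j} e_k by pseudo holomorphy, and nabla_{ebar_j} nabla_{e_i} ebar_l, the conjugate of
   nabla_{e_j} nabla_{ebar_i} e_l, by quasi holomorphy. *)
lemma ah_vf_cnj_frame_ah_vf_frame_gfr:
  assumes quasi: "\<forall>i. quasi_hol U J (e i) p"
  shows "ah_vf (fcnj (e j)) (ah_vf (e i) (gfr g e k l)) p =
    gc g p (nabla Gam (fcnj (e j)) (nabla Gam (e i) (e k)) p) (fcnj (e l) p)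
    + gc g p (nabla Gam (e i) (e k) p) (nabla Gam (fcnj (e j)) (fcnj (e l)) p)"
proof -
  define N1 where "N1 = nabla Gam (e i) (e k)"
  define N2 where "N2 = nabla Gam (e i) (fcnj (e l))"
  have N1_field: "ah_field U N1"
    unfolding N1_def by (intro ah_field_nabla frame_field)
  have N2_field: "ah_field U N2"
    unfolding N2_def by (intro ah_field_nabla frame_field cnj_frame_field)
  have N2_eq: "N2 y = fcnj (nabla Gam (fcnj (e i)) (e l)) y" if "y \<in> U" for y
    using nablav_cnj[OF frame_field that, of Gam "fcnj (e i) y" l]
    unfolding N2_def nabla_def fcnj_def by simp
  have "nablav Gam p (fcnj (e j) p) N2 = nablav Gam p (vcnj (e j p)) (fcnj (nabla Gam (fcnj (e i)) (e l)))"
    unfolding fcnj_def[of "e j"] by (rule nablav_cong[OF open_U p_in_U N2_eq])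
  also have "\<dots> = vcnj (nablav Gam p (e j p) (nabla Gam (fcnj (e i)) (e l)))"
    by (rule nablav_cnj[OF ah_field_nabla[OF cnj_frame_field frame_field] p_in_U])
  finally have N2_deriv: "nablav Gam p (fcnj (e j) p) N2 = 0"
    using nabla_frame_nabla_cnj_frame_frame[OF quasi, of j i l] unfolding nabla_def[of Gam "e j"] by simp
  have "ah_vf (fcnj (e j)) (ah_vf (e i) (gfr g e k l)) p =
    ah_dirc (fcnj (e j) p) (\<lambda>y. gc g y (N1 y) (fcnj (e l) y) + gc g y (e k y) (N2 y)) p"
    unfolding ah_vf_def[of "fcnj (e j)"] N1_def N2_def
    by (rule ah_dirc_cong[OF open_U p_in_U]) (simp add: ah_vf_gfr[OF frame_field])
  also have "\<dots> = ah_dirc (fcnj (e j) p) (\<lambda>y. gc g y (N1 y) (fcnj (e l) y)) p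
                + ah_dirc (fcnj (e j) p) (\<lambda>y. gc g y (e k y) (N2 y)) p"
    by (intro ah_dirc_add ah_smooth_differentiable[OF _ p_in_U] ah_smooth_gc
        N1_field N2_field frame_field cnj_frame_field)
  finally show ?thesis
    using nabla_metric[OF N1_field cnj_frame_field p_in_U] nabla_metric[OF frame_field N2_field p_in_U]
      nabla_cnj_frame_frame N2_deriv
    unfolding N1_def nabla_def by simp
qed

lemma curv_quasi_hol_formula:
  assumes "\<forall>i. quasi_hol U J (e i) p"
  shows "curv g Gam e i j k l p =
    - ah_vf (fcnj (e j)) (ah_vf (e i) (gfr g e k l)) p
    + (\<Sum>a\<in>UNIV. \<Sum>b\<in>UNIV. ginv g e p a b * ah_vf (e i) (gfr g e k b) p
                              * ah_vf (fcnj (e j)) (gfr g e a l) p)"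
proof -
  have "Jc J p (nabla Gam (e i) (e k) p) = \<i> *s nabla Gam (e i) (e k) p"
    unfolding nabla_def
    by (rule nablav_preserves_eigenfield[OF frame_field field10_Jc[OF frame_field10] p_in_U])
  then have "gc g p (nabla Gam (e i) (e k) p) (nabla Gam (fcnj (e j)) (fcnj (e l)) p) =
    (\<Sum>a\<in>UNIV. \<Sum>b\<in>UNIV. ginv g e p a b * ah_vf (e i) (gfr g e k b) p
                              * ah_vf (fcnj (e j)) (gfr g e a l) p)"
    by (simp add: gc_type10_expansion ah_vf_frame_gfr ah_vf_cnj_frame_gfr)
  then show ?thesis
    by (simp add: curv_quasi_hol[OF assms] ah_vf_cnj_frame_ah_vf_frame_gfr[OF assms])
qed

lemma curv_normal_quasi_hol:
  assumes normal: "\<forall>i. normal_quasi_hol U J Gam (e i) p"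
  shows "curv g Gam e i j k l p = - ah_vf (fcnj (e j)) (ah_vf (e i) (gfr g e k l)) p"
proof -
  have "ah_vf (e i) (gfr g e k b) p = 0" for b
    using normal unfolding ah_vf_frame_gfr normal_quasi_hol_def nabla_vanishes_def nabla_def by simp
  moreover have "\<forall>i. quasi_hol U J (e i) p"
    using normal unfolding normal_quasi_hol_def by blast
  ultimately show ?thesis
    by (simp add: curv_quasi_hol_formula)
qed

end

theorem lemma3p5:
  fixes U :: "(real^'m) set"
    and J g :: "real^'m \<Rightarrow> real^'m^'m"
    and Gam :: "real^'m \<Rightarrow> 'm \<Rightarrow> 'm \<Rightarrow> 'm \<Rightarrow> real"
    and e :: "'n::finite \<Rightarrow> real^'m \<Rightarrow> complex^'m"
    and p :: "real^'m"
  assumes dim: "CARD('m) = 2 * CARD('n)"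
    and AH: "almost_hermitian U J g"
    and CC: "canonical_connection U J g Gam"
    and pU: "p \<in> U"
    and fr: "frame10 U J e"
    and ph: "\<forall>i. pseudo_hol U J (e i) p"
  shows
    "(\<forall>j k l. chr Gam e (Inr j) (Inl k) (Inl l) p = 0)
   \<and> (\<forall>j k l. chr Gam e (Inl j) (Inr k) (Inr l) p = 0)
   \<and> (\<forall>j k. ah_lie (e j) (fcnj (e k)) p = 0)
   \<and> (\<forall>i j k. chr Gam e (Inl i) (Inl j) (Inl k) p =
        (\<Sum>l\<in>UNIV. ah_vf (e i) (gfr g e j l) p * ginv g e p k l))
   \<and> (\<forall>i j k. chr Gam e (Inr i) (Inr j) (Inr k) p =
        (\<Sum>l\<in>UNIV. ah_vf (fcnj (e i)) (gfr g e l j) p * ginv g e p l k))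
   \<and> ((\<forall>i. quasi_hol U J (e i) p) \<longrightarrow>
        (\<forall>i j k. nabla Gam (e i) (nabla Gam (fcnj (e j)) (e k)) p = 0))
   \<and> ((\<forall>i. quasi_hol U J (e i) p) \<longrightarrow>
        (\<forall>i j k l. curv g Gam e i j k l p =
           - ah_vf (fcnj (e j)) (ah_vf (e i) (gfr g e k l)) p
           + (\<Sum>a\<in>UNIV. \<Sum>b\<in>UNIV. ginv g e p a b * ah_vf (e i) (gfr g e k b) p
                                     * ah_vf (fcnj (e j)) (gfr g e a l) p)))
   \<and> ((\<forall>i. normal_quasi_hol U J Gam (e i) p) \<longrightarrow>
        (\<forall>i j k l. curv g Gam e i j k l p =
           - ah_vf (fcnj (e j)) (ah_vf (e i) (gfr g e k l)) p))"
proof -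
  interpret pseudo_holomorphic_frame U J g Gam e p
    by unfold_locales (fact AH CC dim pU fr ph)+
  show ?thesis
    by (simp add: chr_cnj_frame_frame_Inl chr_frame_cnj_frame_Inr lie_frame_cnj_frame
        chr_frame_frame_Inl chr_cnj_frame_cnj_frame_Inr nabla_frame_nabla_cnj_frame_frame
        curv_quasi_hol_formula curv_normal_quasi_hol)
qed

end
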